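(* Let $\phi:[0,\infty)\to[0,\infty)$ be an increasing bijection such that $\sum_{k=1}^\infty\frac{1}{1\vee\log(\phi^{-1}(k))}=\infty$. Then there exist an increasing bijection $\psi:[0,\infty)\to[0,\infty)$ with $\psi(x)\leq\phi(x)$ and $\psi(x)\leq\sqrt{x}$ for every $x\geq0$, and a strictly increasing function $a:\mathbb{N}\to\mathbb{N}$ satisfying \[ \lim_{k\to\infty}\big(a(k)-a(k-1)\big)=+\infty \qquad\text{and}\qquad \sum_{k=1}^\infty\frac{1}{1\vee\log(\psi^{-1}(a(k)))}=\infty, \] such that every sequence $(z_n)_{n\geq0}$ of positive reals satisfying $\limsup_{n\to\infty}e^{\phi(n)}z_n<\infty$ satisfies \[ \liminf_{k\to\infty}\frac1k\#\{1\leq r\leq k: z\text{ is }\psi\text{-good on scale }a(r)\}\geq\frac12 . \]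
   Context: For a positive sequence $z=(z_n)_{n\geq0}$ with $z_n\to0$, let $z_n^*=\min_{0\leq m\leq n}z_m$ and $k_0=\lceil 2\log z_0^{-1}\rceil$. For $k\geq k_0$ let $D_k=(\{z_m^*:m\geq1\}\cap[e^{-k-1},e^{-k}])\cup\{e^{-k},e^{-k-1}\}$, $N_k=|D_k|-1$, and list the elements of $D_k$ in decreasing order as $e^{-k}=d_{0,k}>d_{1,k}>\dots>d_{N_k,k}=e^{-k-1}$. For an increasing function $\psi$, write $\psi^{-1}(x)=\min\{y\geq0:\psi(y)\geq x\}$. For $k\geq k_0$, $z$ is $\psi$-good on scale $k$ if \[ \prod\Big\{\tfrac{d_{i+1,k}}{d_{i,k}}:0\leq i<N_k,\ \tfrac{d_{i+1,k}}{d_{i,k}}\leq\exp\big[-\tfrac{k}{2\psi^{-1}(k)}\big]\Big\}\leq e^{-1/2}. \] (Goodness is only defined for scales $k\geq k_0$; the finitely many scales $a(r)<k_0$ do not affect the $\liminf$.) $\phi^{-1}$ is the inverse of $\phi$. *)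

theory Defs
  imports "HOL-Analysis.Analysis"
begin

definition inc_bij :: "(real \<Rightarrow> real) \<Rightarrow> bool" where
  "inc_bij f \<longleftrightarrow> mono_on {0..} f \<and> bij_betw f {0..} {0..}"

definition ginv :: "(real \<Rightarrow> real) \<Rightarrow> real \<Rightarrow> real" where
  "ginv f x = (LEAST y::real. 0 \<le> y \<and> x \<le> f y)"

definition zstar :: "(nat \<Rightarrow> real) \<Rightarrow> nat \<Rightarrow> real" where
  "zstar z n = Min {z m | m. m \<le> n}"

definition kzero :: "(nat \<Rightarrow> real) \<Rightarrow> int" where
  "kzero z = \<lceil>2 * ln (1 / z 0)\<rceil>"

definition Dset :: "(nat \<Rightarrow> real) \<Rightarrow> nat \<Rightarrow> real set" where
  "Dset z k = ({zstar z m | m. m \<ge> 1} \<inter> {exp (- real k - 1) .. exp (- real k)})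
              \<union> {exp (- real k), exp (- real k - 1)}"

definition dlist :: "(nat \<Rightarrow> real) \<Rightarrow> nat \<Rightarrow> real list" where
  "dlist z k = rev (sorted_list_of_set (Dset z k))"

definition Nk :: "(nat \<Rightarrow> real) \<Rightarrow> nat \<Rightarrow> nat" where
  "Nk z k = card (Dset z k) - 1"

text \<open>z is psi-good on scale k (only defined for k \<ge> k_0).\<close>
definition good :: "(real \<Rightarrow> real) \<Rightarrow> (nat \<Rightarrow> real) \<Rightarrow> nat \<Rightarrow> bool" where
  "good \<psi> z k \<longleftrightarrow> int k \<ge> kzero z \<and>
     (let d = dlist z k;
          thr = exp (- (real k / (2 * ginv \<psi> (real k))))
      in (\<Prod>i\<in>{i. i < Nk z k \<and> d ! (i+1) / d ! i \<le> thr}. d ! (i+1) / d ! i) \<le> exp (- 1 / 2))"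

end

theory Submission
  imports Defs "HOL-Real_Asymp.Real_Asymp"
begin

(*
  Take psi x = min (sqrt x / 2) (min (phi (sqrt x) / 2) (phi x)). The two square-root
  terms give psi^-1(k) >= max (4 k^2) (phi^-1(2k)^2) >= k (k + phi^-1(2k)).

  If e^phi(n) z_n <= C for n >= n0, the running minimum z*_m lies below e^(-k-1) once
  m > n0 + phi^-1(k + 1 + ln C), so for large k there are N_k <= k + phi^-1(2k) ratios
  d_(i+1)/d_i. They multiply to e^-1, and those above the threshold
  t = exp (-k / (2 psi^-1(k))) multiply to at least t^N_k >= e^(-1/2); so the small ones
  multiply to at most e^(-1/2). Every large scale is therefore good, and the density in
  the conclusion tends to 1 along any strictly increasing a.

  The series for psi diverges because
  max 1 (ln psi^-1(n)) <= 4 max (1 + ln (n+1)) (max 1 (ln phi^-1(2n+1))):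
  the odd terms of the hypothesis series still diverge by monotonicity, and the maximum
  with 1 + ln (n+1) is harmless since n / ln n tends to infinity. Finally a is built with steps a(k+1) - a(k) ~ sqrt (S (a k)), S the partial
  sums: the increment of sqrt (S + 1) over the block starting at a k is at most the term
  at a k, so the series along a still diverges while the gaps tend to infinity.
*)

section \<open>Increasing bijections of the half-line\<close>

lemma inc_bijD:
  assumes "inc_bij f"
  shows inc_bij_nonneg: "0 \<le> x \<Longrightarrow> 0 \<le> f x"
    and inc_bij_strict_mono: "0 \<le> x \<Longrightarrow> x < y \<Longrightarrow> f x < f y"
    and inc_bij_surj: "0 \<le> y \<Longrightarrow> \<exists>x\<ge>0. f x = y"
proof -
  have m: "mono_on {0..} f" and b: "bij_betw f {0..} {0..}"
    using assms by (auto simp: inc_bij_def)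
  show "0 \<le> x \<Longrightarrow> 0 \<le> f x" using b by (auto simp: bij_betw_def)
  show "0 \<le> y \<Longrightarrow> \<exists>x\<ge>0. f x = y" using b by (force simp: bij_betw_def)
  assume "0 \<le> x" "x < y"
  moreover from this have "f x \<le> f y" using m by (auto simp: mono_on_def)
  moreover have "f x \<noteq> f y"
    using b \<open>0 \<le> x\<close> \<open>x < y\<close> unfolding bij_betw_def inj_on_def by force
  ultimately show "f x < f y" by simp
qed

lemma inc_bijI:
  assumes "\<And>x. 0 \<le> x \<Longrightarrow> 0 \<le> f x"
    and "\<And>x y. 0 \<le> x \<Longrightarrow> x < y \<Longrightarrow> f x < f y"
    and "\<And>y. 0 \<le> y \<Longrightarrow> \<exists>x\<ge>0. f x = y"
  shows "inc_bij f"
proof -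
  have "mono_on {0..} f" using assms(2) by (force simp: mono_on_def less_eq_real_def)
  moreover have "inj_on f {0..}"
    by (rule inj_onI) (metis assms(2) atLeast_iff linorder_neq_iff order_less_irrefl)
  moreover have "f ` {0..} = {0..}" using assms(1,3) by (auto simp: image_iff)
  ultimately show ?thesis by (auto simp: inc_bij_def bij_betw_def)
qed

lemma inc_bij_le_iff:
  assumes "inc_bij f" "0 \<le> x" "0 \<le> y"
  shows "f x \<le> f y \<longleftrightarrow> x \<le> y"
  using inc_bij_strict_mono[OF assms(1), of x y] inc_bij_strict_mono[OF assms(1), of y x] assms(2,3)
  by (cases x y rule: linorder_cases) auto

lemma inc_bij_min:
  assumes f: "inc_bij f" and g: "inc_bij g"
  shows "inc_bij (\<lambda>x. min (f x) (g x))"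
proof (rule inc_bijI)
  show "0 \<le> min (f x) (g x)" if "0 \<le> x" for x
    using that inc_bij_nonneg[OF f] inc_bij_nonneg[OF g] by simp
  show "min (f x) (g x) < min (f y) (g y)" if "0 \<le> x" "x < y" for x y
    using that inc_bij_strict_mono[OF f] inc_bij_strict_mono[OF g] by (simp add: min_less_iff_disj)
  fix y :: real assume "0 \<le> y"
  then obtain x1 x2 where x1: "0 \<le> x1" "f x1 = y" and x2: "0 \<le> x2" "g x2 = y"
    using inc_bij_surj[OF f] inc_bij_surj[OF g] by metis
  show "\<exists>x\<ge>0. min (f x) (g x) = y"
  proof (cases "x1 \<le> x2")
    case True
    then have "y \<le> f x2" using inc_bij_le_iff[OF f x1(1) x2(1)] x1 by simp
    then show ?thesis using x2 by (intro exI[of _ x2]) auto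
  next
    case False
    then have "y \<le> g x1" using inc_bij_le_iff[OF g x2(1) x1(1)] x2 by simp
    then show ?thesis using x1 by (intro exI[of _ x1]) auto
  qed
qed

lemma inc_bij_comp:
  assumes f: "inc_bij f" and g: "inc_bij g"
  shows "inc_bij (\<lambda>x. f (g x))"
proof (rule inc_bijI)
  show "0 \<le> f (g x)" if "0 \<le> x" for x using that inc_bij_nonneg[OF f] inc_bij_nonneg[OF g] by simp
  show "f (g x) < f (g y)" if "0 \<le> x" "x < y" for x y
    using that inc_bij_nonneg[OF g] inc_bij_strict_mono[OF f] inc_bij_strict_mono[OF g] by simp
  show "\<exists>x\<ge>0. f (g x) = y" if "0 \<le> y" for y
    by (metis that inc_bij_surj[OF f] inc_bij_surj[OF g])
qed

lemma inc_bij_sqrt: "inc_bij sqrt"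
proof (rule inc_bijI)
  show "\<exists>x\<ge>0. sqrt x = y" if "0 \<le> y" for y
    using that by (intro exI[of _ "y\<^sup>2"]) auto
qed auto

lemma inc_bij_divide: "c > 0 \<Longrightarrow> inc_bij (\<lambda>x. x / c)"
  by (rule inc_bijI) (auto simp: divide_strict_right_mono intro!: exI[of _ "c * _"])

lemma ginv_eq:
  assumes "inc_bij f" "0 \<le> x" "f x = y"
  shows "ginv f y = x"
  unfolding ginv_def
  by (rule Least_equality) (use assms inc_bij_le_iff in auto)

lemma ginv_nonneg: "inc_bij f \<Longrightarrow> 0 \<le> y \<Longrightarrow> 0 \<le> ginv f y"
  by (metis ginv_eq inc_bij_surj)

lemma f_ginv: "inc_bij f \<Longrightarrow> 0 \<le> y \<Longrightarrow> f (ginv f y) = y"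
  by (metis ginv_eq inc_bij_surj)

lemma ginv_eq_inv_into:
  assumes f: "inc_bij f" and "0 \<le> y"
  shows "ginv f y = inv_into {0..} f y"
proof -
  have "y \<in> f ` {0..}" using inc_bij_surj[OF assms] by auto
  then show ?thesis
    using ginv_eq[OF f] inv_into_into[of y f "{0..}"] f_inv_into_f[of y f "{0..}"] by simp
qed

lemma ginv_le_iff:
  assumes "inc_bij f" and "0 \<le> x" "0 \<le> y"
  shows "ginv f y \<le> x \<longleftrightarrow> y \<le> f x"
  by (metis assms ginv_nonneg f_ginv inc_bij_le_iff)

lemma le_ginv_iff:
  assumes "inc_bij f" and "0 \<le> x" "0 \<le> y"
  shows "x \<le> ginv f y \<longleftrightarrow> f x \<le> y"
  by (metis assms ginv_nonneg f_ginv inc_bij_le_iff)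

lemma ginv_mono:
  assumes "inc_bij f" and "0 \<le> y" "y \<le> y'"
  shows "ginv f y \<le> ginv f y'"
  by (metis assms ginv_nonneg le_ginv_iff f_ginv order.trans)

section \<open>Divergent series\<close>

lemma not_summable_iff_unbounded_partial_sums:
  fixes f :: "nat \<Rightarrow> real"
  assumes "\<And>n. 0 \<le> f n"
  shows "\<not> summable f \<longleftrightarrow> (\<forall>B. \<exists>N. B < (\<Sum>i<N. f i))"
proof
  assume "\<not> summable f"
  then show "\<forall>B. \<exists>N. B < (\<Sum>i<N. f i)"
    using summableI_nonneg_bounded[of f] assms by (metis not_less)
next
  assume "\<forall>B. \<exists>N. B < (\<Sum>i<N. f i)"
  then show "\<not> summable f"
    using sum_le_suminf[of f "{..<_}"] assms by (metis finite_lessThan not_less)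
qed

lemma not_summable_even_terms:
  fixes u :: "nat \<Rightarrow> real"
  assumes dec: "decseq u" and nonneg: "\<And>n. 0 \<le> u n" and div: "\<not> summable u"
  shows "\<not> summable (\<lambda>n. u (2 * n))"
proof -
  have pairs: "(\<Sum>k<2 * N. u k) \<le> 2 * (\<Sum>n<N. u (2 * n))" for N
  proof (induction N)
    case (Suc N)
    have "u (Suc (2 * N)) \<le> u (2 * N)" using dec by (simp add: decseq_Suc_iff)
    then show ?case using Suc by simp
  qed simp
  have "\<exists>N. B < (\<Sum>n<N. u (2 * n))" for B
  proof -
    obtain N where N: "2 * B < (\<Sum>k<N. u k)"
      using not_summable_iff_unbounded_partial_sums[OF nonneg, THEN iffD1, OF div] by blast
    have "(\<Sum>k<N. u k) \<le> (\<Sum>k<2 * N. u k)"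
      using nonneg by (intro sum_mono2) auto
    with N pairs[of N] show ?thesis by (intro exI[of _ N]) linarith
  qed
  then show ?thesis
    using not_summable_iff_unbounded_partial_sums[of "\<lambda>n. u (2 * n)"] nonneg by blast
qed

lemma not_summable_inverse_max:
  fixes h L :: "nat \<Rightarrow> real"
  assumes h_pos: "\<And>n. 0 < h n" and "incseq h" "incseq L"
    and div: "\<not> summable (\<lambda>n. 1 / h n)"
    and L: "filterlim (\<lambda>n. real n / L n) at_top sequentially"
  shows "\<not> summable (\<lambda>n. 1 / max (L n) (h n))"
proof (cases "eventually (\<lambda>n. L n \<le> h n) sequentially")
  case True
  then have "eventually (\<lambda>n. 1 / max (L n) (h n) = 1 / h n) sequentially"
    by eventually_elim simp
  then show ?thesis using div summable_cong by fastforce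
next
  case False
  have nonneg: "0 \<le> 1 / max (L n) (h n)" for n using h_pos[of n] by simp
  have "\<exists>N. B < (\<Sum>j<N. 1 / max (L j) (h j))" for B
  proof -
    have "frequently (\<lambda>n. B < real n / L n \<and> h n < L n) sequentially"
      using frequently_eventually_conj[OF _ filterlim_at_top_dense[THEN iffD1, OF L, rule_format]]
        False by (simp add: not_eventually not_le)
    then obtain n where n: "B < real n / L n" "h n < L n" by (auto dest: frequently_ex)
    then have "0 < L n" using h_pos[of n] by linarith
    have "(\<Sum>j<Suc n. 1 / L n) \<le> (\<Sum>j<Suc n. 1 / max (L j) (h j))"
    proof (intro sum_mono)
      fix j assume "j \<in> {..<Suc n}"
      then have "L j \<le> L n" "h j \<le> h n"
        using \<open>incseq L\<close> \<open>incseq h\<close> by (auto simp: incseq_def)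
      then have "max (L j) (h j) \<le> L n" using n(2) by simp
      then show "1 / L n \<le> 1 / max (L j) (h j)" using h_pos[of j] by (simp add: frac_le)
    qed
    moreover have "real n / L n \<le> (\<Sum>j<Suc n. 1 / L n)"
      using \<open>0 < L n\<close> by (simp add: divide_right_mono)
    ultimately show ?thesis using n(1) by (intro exI[of _ "Suc n"]) linarith
  qed
  then show ?thesis using not_summable_iff_unbounded_partial_sums[of "\<lambda>n. 1 / max (L n) (h n)"] nonneg by blast
qed

lemma sqrt_increment_le:
  fixes s \<Delta> g c :: real
  assumes "0 \<le> s" "0 \<le> \<Delta>" "0 \<le> c" "g \<le> sqrt s + 1" "\<Delta> \<le> g * c"
  shows "sqrt (s + \<Delta> + 1) - sqrt (s + 1) \<le> c"
proof -
  define u v where "u = sqrt (s + 1)" and "v = sqrt (s + \<Delta> + 1)"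
  have "sqrt s \<le> u" "1 \<le> v" "0 < u" using assms(1,2) by (auto simp: u_def v_def)
  then have "g \<le> v + u" using assms(4) by linarith
  have "(v - u) * (v + u) = v\<^sup>2 - u\<^sup>2" by (simp add: power2_eq_square algebra_simps)
  also have "\<dots> = \<Delta>" using assms(1,2) by (simp add: u_def v_def)
  also have "\<dots> \<le> c * (v + u)"
    using assms(5) mult_left_mono[OF \<open>g \<le> v + u\<close> assms(3)] by (simp add: mult.commute)
  finally have "(v - u) * (v + u) \<le> c * (v + u)" .
  then have "v - u \<le> c" using \<open>0 < u\<close> \<open>1 \<le> v\<close> by (simp add: mult_le_cancel_right)
  then show ?thesis unfolding u_def v_def .
qed

lemma not_summable_subseq_sqrt_steps:
  fixes H :: "nat \<Rightarrow> real" and a :: "nat \<Rightarrow> nat"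
  assumes H_pos: "\<And>n. 0 < H n" and H_mono: "incseq H" and div: "\<not> summable (\<lambda>n. 1 / H n)"
    and a: "strict_mono a" "a 0 = 0"
    and steps: "\<And>k. real (a (Suc k) - a k) \<le> sqrt (\<Sum>n<a k. 1 / H n) + 1"
  shows "\<not> summable (\<lambda>k. 1 / H (a k))"
proof -
  define S where "S N = (\<Sum>n<N. 1 / H n)" for N
  have nonneg: "0 \<le> 1 / H n" for n using H_pos[of n] by simp
  have S_mono: "S m \<le> S n" if "m \<le> n" for m n
    unfolding S_def using that nonneg by (intro sum_mono2) auto
  have S_nonneg: "0 \<le> S n" for n unfolding S_def by (intro sum_nonneg nonneg)
  have a_le: "a k \<le> a (Suc k)" for k using a(1) by (simp add: strict_mono_less_eq)
  have block: "sqrt (S (a (Suc k)) + 1) - sqrt (S (a k) + 1) \<le> 1 / H (a k)" for k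
  proof -
    have "S (a (Suc k)) - S (a k) = (\<Sum>n\<in>{a k..<a (Suc k)}. 1 / H n)"
      unfolding S_def using a_le by (simp add: lessThan_atLeast0 sum_diff_nat_ivl)
    also have "\<dots> \<le> (\<Sum>n\<in>{a k..<a (Suc k)}. 1 / H (a k))"
      using H_mono H_pos by (intro sum_mono) (simp add: incseq_def frac_le)
    also have "\<dots> = real (a (Suc k) - a k) * (1 / H (a k))" by simp
    finally have "S (a (Suc k)) - S (a k) \<le> real (a (Suc k) - a k) * (1 / H (a k))" .
    moreover have "0 \<le> S (a (Suc k)) - S (a k)" using S_mono[OF a_le] by simp
    ultimately show ?thesis
      using sqrt_increment_le[OF S_nonneg _ nonneg steps[folded S_def]] by fastforce
  qed
  have "\<exists>K. B < (\<Sum>k<K. 1 / H (a k))" for B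
  proof -
    obtain N where N: "(B + 1)\<^sup>2 < S N"
      using not_summable_iff_unbounded_partial_sums[OF nonneg, THEN iffD1, OF div] by (auto simp: S_def)
    have "(B + 1)\<^sup>2 < S (a N) + 1" using N S_mono[OF strict_mono_imp_increasing[OF a(1)], of N] by simp
    then have "B + 1 < sqrt (S (a N) + 1)" by (rule real_less_rsqrt)
    also have "\<dots> - 1 = (\<Sum>k<N. sqrt (S (a (Suc k)) + 1) - sqrt (S (a k) + 1))"
      using sum_lessThan_telescope[of "\<lambda>k. sqrt (S (a k) + 1)" N] by (simp add: a(2) S_def)
    also have "\<dots> \<le> (\<Sum>k<N. 1 / H (a k))" by (intro sum_mono block)
    finally show ?thesis by auto
  qed
  then show ?thesis
    using not_summable_iff_unbounded_partial_sums[of "\<lambda>k. 1 / H (a k)"] nonneg by blast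
qed

lemma not_summable_subseq_growing_gaps:
  fixes H :: "nat \<Rightarrow> real"
  assumes H_pos: "\<And>n. 0 < H n" and "incseq H" and div: "\<not> summable (\<lambda>n. 1 / H n)"
  obtains a :: "nat \<Rightarrow> nat" where "strict_mono a"
    and "filterlim (\<lambda>k. real (a (Suc k)) - real (a k)) at_top sequentially"
    and "\<not> summable (\<lambda>k. 1 / H (a (Suc k)))"
proof -
  define S where "S N = (\<Sum>n<N. 1 / H n)" for N
  have nonneg: "0 \<le> 1 / H n" for n using H_pos[of n] by simp
  have S_unbounded: "\<exists>N. B < S N" for B
    using not_summable_iff_unbounded_partial_sums[OF nonneg, THEN iffD1, OF div] by (simp add: S_def)
  have S_mono: "S m \<le> S n" if "m \<le> n" for m n
    unfolding S_def using that nonneg by (intro sum_mono2) auto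
  have S_nonneg: "0 \<le> S n" for n unfolding S_def by (intro sum_nonneg nonneg)
  define \<gamma> where "\<gamma> n = nat \<lfloor>sqrt (S n)\<rfloor> + 1" for n
  have \<gamma>_bounds: "sqrt (S n) \<le> real (\<gamma> n)" "real (\<gamma> n) \<le> sqrt (S n) + 1" for n
    using S_nonneg[of n] unfolding \<gamma>_def by (simp_all add: of_nat_nat) linarith
  define a where "a = rec_nat 0 (\<lambda>_ ak. ak + \<gamma> ak)"
  have a_0: "a 0 = 0" and a_Suc: "a (Suc k) = a k + \<gamma> (a k)" for k by (simp_all add: a_def)
  have "strict_mono a" unfolding strict_mono_Suc_iff by (simp add: a_Suc \<gamma>_def)
  have "filterlim (\<lambda>k. real (a (Suc k)) - real (a k)) at_top sequentially"
    unfolding filterlim_at_top eventually_sequentially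
  proof
    fix Z :: real
    obtain N where N: "Z\<^sup>2 < S N" using S_unbounded by blast
    have "Z \<le> real (a (Suc k)) - real (a k)" if "N \<le> k" for k
    proof -
      have "Z\<^sup>2 < S (a k)"
        using N S_mono[of N "a k"] strict_mono_imp_increasing[OF \<open>strict_mono a\<close>, of k] that by simp
      then have "Z \<le> sqrt (S (a k))" using real_less_rsqrt by fastforce
      then show ?thesis using \<gamma>_bounds(1)[of "a k"] a_Suc[of k] by simp
    qed
    then show "\<exists>N. \<forall>k\<ge>N. Z \<le> real (a (Suc k)) - real (a k)" by blast
  qed
  moreover have "\<not> summable (\<lambda>k. 1 / H (a k))"
    using \<gamma>_bounds(2) by (intro not_summable_subseq_sqrt_steps[OF assms \<open>strict_mono a\<close> a_0])
      (simp add: a_Suc S_def)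
  ultimately show ?thesis using that \<open>strict_mono a\<close> summable_Suc_iff by blast
qed

section \<open>The comparison function\<close>

definition psi_of :: "(real \<Rightarrow> real) \<Rightarrow> real \<Rightarrow> real" where
  "psi_of \<phi> x = min (sqrt x / 2) (min (\<phi> (sqrt x) / 2) (\<phi> x))"

lemma inc_bij_psi_of: "inc_bij \<phi> \<Longrightarrow> inc_bij (psi_of \<phi>)"
  unfolding psi_of_def
  by (intro inc_bij_min inc_bij_comp[OF inc_bij_divide inc_bij_sqrt]
      inc_bij_comp[OF inc_bij_divide inc_bij_comp[OF _ inc_bij_sqrt]]) simp_all

lemma psi_of_le: "psi_of \<phi> x \<le> \<phi> x" "0 \<le> x \<Longrightarrow> psi_of \<phi> x \<le> sqrt x"
  unfolding psi_of_def by (auto simp: min_le_iff_disj)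

lemma ginv_psi_of_lower:
  assumes \<phi>: "inc_bij \<phi>" and y: "0 \<le> y"
  shows "4 * y\<^sup>2 \<le> ginv (psi_of \<phi>) y" "(ginv \<phi> (2 * y))\<^sup>2 \<le> ginv (psi_of \<phi>) y"
proof -
  have "psi_of \<phi> (4 * y\<^sup>2) \<le> y"
    using y by (simp add: psi_of_def real_sqrt_mult)
  then show "4 * y\<^sup>2 \<le> ginv (psi_of \<phi>) y"
    using le_ginv_iff[OF inc_bij_psi_of[OF \<phi>]] y by simp
  have "psi_of \<phi> ((ginv \<phi> (2 * y))\<^sup>2) \<le> y"
    using ginv_nonneg[OF \<phi>, of "2 * y"] f_ginv[OF \<phi>, of "2 * y"] y by (simp add: psi_of_def)
  then show "(ginv \<phi> (2 * y))\<^sup>2 \<le> ginv (psi_of \<phi>) y"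
    using le_ginv_iff[OF inc_bij_psi_of[OF \<phi>]] y by simp
qed

lemma ginv_psi_of_upper:
  assumes \<phi>: "inc_bij \<phi>" and y: "0 \<le> y" and q: "1 \<le> q" "2 * y \<le> \<phi> q"
  shows "ginv (psi_of \<phi>) y \<le> (2 * (y + 1) * q)\<^sup>2"
proof -
  define r where "r = 2 * (y + 1) * q"
  have "(y + 1) * 1 \<le> (y + 1) * q" using y q(1) by (intro mult_left_mono) simp_all
  then have "y + 1 \<le> r / 2" by (simp add: r_def algebra_simps)
  have "q \<le> r" using mult_right_mono[of 1 "2 * (y + 1)" q] y q(1) by (simp add: r_def)
  moreover have "1 * r \<le> r * r" using \<open>q \<le> r\<close> q(1) by (intro mult_right_mono) simp_all
  ultimately have "q \<le> r\<^sup>2" by (simp add: power2_eq_square)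
  have "\<phi> q \<le> \<phi> r" "\<phi> q \<le> \<phi> (r\<^sup>2)"
    using \<open>q \<le> r\<close> \<open>q \<le> r\<^sup>2\<close> q(1) inc_bij_le_iff[OF \<phi>] by simp_all
  then have "y \<le> psi_of \<phi> (r\<^sup>2)"
    using \<open>y + 1 \<le> r / 2\<close> \<open>q \<le> r\<close> q y by (simp add: psi_of_def)
  then show ?thesis
    using ginv_le_iff[OF inc_bij_psi_of[OF \<phi>]] y by (simp add: r_def)
qed

lemma max_1_ln_mono:
  fixes x y :: real
  assumes "0 \<le> x" "x \<le> y"
  shows "max 1 (ln x) \<le> max 1 (ln y)"
proof (cases "x = 0")
  case False
  then have "ln x \<le> ln y" using assms by simp
  then show ?thesis by simp
qed simp

lemma max_1_ln_ginv_psi_of_le: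
  assumes \<phi>: "inc_bij \<phi>"
  shows "max 1 (ln (ginv (psi_of \<phi>) (real n)))
    \<le> 4 * max (1 + ln (real n + 1)) (max 1 (ln (ginv \<phi> (real (2 * n + 1)))))"
    (is "_ \<le> 4 * max ?L ?F")
proof -
  define q where "q = max 1 (ginv \<phi> (real (2 * n + 1)))"
  have "2 * real n \<le> \<phi> (ginv \<phi> (real (2 * n + 1)))" using f_ginv[OF \<phi>] by simp
  also have "\<dots> \<le> \<phi> q" using ginv_nonneg[OF \<phi>] inc_bij_le_iff[OF \<phi>] by (simp add: q_def)
  finally have "ginv (psi_of \<phi>) (real n) \<le> (2 * (real n + 1) * q)\<^sup>2"
    by (intro ginv_psi_of_upper[OF \<phi>]) (simp_all add: q_def)
  then have "max 1 (ln (ginv (psi_of \<phi>) (real n))) \<le> max 1 (ln ((2 * (real n + 1) * q)\<^sup>2))"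
    using ginv_nonneg[OF inc_bij_psi_of[OF \<phi>]] by (intro max_1_ln_mono) simp_all
  also have "ln ((2 * (real n + 1) * q)\<^sup>2) = 2 * ln 2 + 2 * ln (real n + 1) + 2 * ln q"
    using ln_realpow[of "2 * (real n + 1) * q" 2] ln_mult[of "2 * (real n + 1)" q]
      ln_mult[of 2 "real n + 1"] by (simp add: q_def)
  also have "max 1 \<dots> \<le> 4 * max ?L ?F"
  proof -
    have "max 1 (2 * a + 2 * b + 2 * c) \<le> 4 * max (1 + b) f"
      if "a \<le> 1" "c \<le> f" "1 \<le> f" for a b c f :: real
      using that by (simp add: max_def)
    moreover have "ln 2 \<le> (1::real)" using ln_le_minus_one[of 2] by simp
    moreover have "ln q \<le> ?F" by (simp add: q_def max_def)
    ultimately show ?thesis by simp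
  qed
  finally show ?thesis .
qed

lemma not_summable_psi_of:
  assumes \<phi>: "inc_bij \<phi>"
    and div: "\<not> summable (\<lambda>k. 1 / max 1 (ln (ginv \<phi> (real (Suc k)))))"
  shows "\<not> summable (\<lambda>n. 1 / max 1 (ln (ginv (psi_of \<phi>) (real n))))"
proof
  define F where "F m = max 1 (ln (ginv \<phi> (real m)))" for m :: nat
  define L where "L n = 1 + ln (real n + 1)" for n :: nat
  have F_ge: "1 \<le> F m" for m by (simp add: F_def)
  have "incseq F"
    unfolding incseq_def F_def using ginv_nonneg[OF \<phi>] ginv_mono[OF \<phi>]
    by (intro allI impI max_1_ln_mono) simp_all
  then have "decseq (\<lambda>k. 1 / F (Suc k))"
    unfolding decseq_def
  proof (intro allI impI)
    fix m n :: nat assume "m \<le> n"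
    then show "1 / F (Suc n) \<le> 1 / F (Suc m)"
      using \<open>incseq F\<close> F_ge[of "Suc m"] F_ge[of "Suc n"]
      by (intro divide_left_mono) (auto simp: incseq_def)
  qed
  then have "\<not> summable (\<lambda>n. 1 / F (Suc (2 * n)))"
    using not_summable_even_terms[of "\<lambda>k. 1 / F (Suc k)"] div F_ge
    by (simp add: F_def order.trans[OF zero_le_one])
  moreover have "incseq L" by (auto simp: incseq_def L_def)
  moreover have "filterlim (\<lambda>n. real n / L n) at_top sequentially"
    unfolding L_def by real_asymp
  ultimately have "\<not> summable (\<lambda>n. 1 / max (L n) (F (2 * n + 1)))"
    using \<open>incseq F\<close> F_ge
    by (intro not_summable_inverse_max) (auto simp: incseq_def less_le_trans[OF zero_less_one])
  moreover assume "summable (\<lambda>n. 1 / max 1 (ln (ginv (psi_of \<phi>) (real n))))"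
  then have "summable (\<lambda>n. 4 * (1 / max 1 (ln (ginv (psi_of \<phi>) (real n)))))"
    by (rule summable_mult)
  then have "summable (\<lambda>n. 1 / max (L n) (F (2 * n + 1)))"
  proof (rule summable_comparison_test'[where N = 0])
    fix n
    have "max 1 (ln (ginv (psi_of \<phi>) (real n))) \<le> 4 * max (L n) (F (2 * n + 1))"
      using max_1_ln_ginv_psi_of_le[OF \<phi>] by (simp add: L_def F_def)
    then show "norm (1 / max (L n) (F (2 * n + 1))) \<le> 4 * (1 / max 1 (ln (ginv (psi_of \<phi>) (real n))))"
      using F_ge[of "2 * n + 1"] by (simp add: field_simps)
  qed
  ultimately show False by contradiction
qed

section \<open>Good scales\<close>

lemma prod_small_ratios_le:
  fixes d :: "real list" and t :: real
  assumes pos: "\<And>i. i \<le> N \<Longrightarrow> 0 < d ! i" and t: "0 < t" "t \<le> 1"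
  shows "(\<Prod>i\<in>{i. i < N \<and> d ! (i + 1) / d ! i \<le> t}. d ! (i + 1) / d ! i) \<le> (d ! N / d ! 0) / t ^ N"
proof -
  define r where "r i = d ! (i + 1) / d ! i" for i
  define I where "I = {i. i < N \<and> r i \<le> t}"
  have r_pos: "0 < r i" if "i < N" for i using that pos by (simp add: r_def)
  have telescope: "(\<Prod>i<n. r i) = d ! n / d ! 0" if "n \<le> N" for n
    using that
  proof (induction n)
    case (Suc n)
    then show ?case using pos[of n] by (simp add: r_def)
  qed (use pos[of 0] in simp)
  have "I \<subseteq> {..<N}" by (auto simp: I_def)
  then have split: "(\<Prod>i<N. r i) = (\<Prod>i\<in>{..<N} - I. r i) * (\<Prod>i\<in>I. r i)"
    by (simp add: prod.subset_diff)
  have "t ^ N \<le> t ^ card ({..<N} - I)"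
    using t card_mono[OF finite_lessThan Diff_subset, of N I] by (intro power_decreasing) simp_all
  also have "\<dots> = (\<Prod>i\<in>{..<N} - I. t)" by simp
  also have "\<dots> \<le> (\<Prod>i\<in>{..<N} - I. r i)"
    using t by (intro prod_mono) (auto simp: I_def)
  finally have "(\<Prod>i\<in>I. r i) * t ^ N \<le> (\<Prod>i\<in>I. r i) * (\<Prod>i\<in>{..<N} - I. r i)"
    by (intro mult_left_mono prod_nonneg) (auto simp: I_def less_imp_le[OF r_pos])
  also have "\<dots> = d ! N / d ! 0" using split telescope[of N] by simp
  finally have "(\<Prod>i\<in>I. r i) \<le> (d ! N / d ! 0) / t ^ N"
    using t pos[of 0] by (simp add: field_simps)
  then show ?thesis by (simp add: I_def r_def)
qed

lemma rev_sorted_list_of_set_ends: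
  fixes D :: "'a::linorder set"
  assumes "finite D" "lo \<in> D" "hi \<in> D" "\<And>x. x \<in> D \<Longrightarrow> lo \<le> x \<and> x \<le> hi"
  defines "d \<equiv> rev (sorted_list_of_set D)"
  shows "d ! 0 = hi" "d ! (card D - 1) = lo"
proof -
  define s where "s = sorted_list_of_set D"
  have s: "sorted s" "set s = D" "length s = card D"
    unfolding s_def using sorted_sorted_list_of_set set_sorted_list_of_set[OF assms(1)]
      length_sorted_list_of_set by blast+
  have "0 < card D" using assms(1,2) by (auto simp: card_gt_0_iff)
  have s_mem: "s ! j \<in> D" if "j < card D" for j using that s(2,3) nth_mem by metis
  obtain j j' where j: "j < card D" "s ! j = lo" and j': "j' < card D" "s ! j' = hi"
    using assms(2,3) s(2,3) by (metis in_set_conv_nth)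
  have "s ! 0 \<le> s ! j" using sorted_nth_mono[OF s(1), of 0 j] j s(3) by simp
  then have "s ! 0 = lo" using j assms(4)[OF s_mem[OF \<open>0 < card D\<close>]] by simp
  moreover have "s ! j' \<le> s ! (card D - 1)"
    using sorted_nth_mono[OF s(1), of j' "card D - 1"] j' s(3) by simp
  then have "s ! (card D - 1) = hi"
    using j' assms(4)[OF s_mem[of "card D - 1"]] \<open>0 < card D\<close> by simp
  ultimately show "d ! 0 = hi" "d ! (card D - 1) = lo"
    using s(3) \<open>0 < card D\<close> by (simp_all add: d_def s_def[symmetric] rev_nth)
qed

lemma good_if_Nk_le:
  assumes fin: "finite (Dset z k)" and k: "kzero z \<le> int k"
    and N_le: "real (Nk z k) * real k \<le> ginv \<psi> (real k)"
  shows "good \<psi> z k"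
proof -
  define lo hi where "lo = exp (- real k - 1)" and "hi = exp (- real k)"
  define D N d g where "D = Dset z k" and "N = Nk z k" and "d = dlist z k"
    and "g = ginv \<psi> (real k)"
  define t where "t = exp (- (real k / (2 * g)))"
  have D: "lo \<in> D" "hi \<in> D" "\<And>x. x \<in> D \<Longrightarrow> lo \<le> x \<and> x \<le> hi"
    by (auto simp: D_def Dset_def lo_def hi_def)
  have "card D \<noteq> 0" using fin D(1) by (auto simp: D_def)
  then have N: "card D = Suc N" by (simp add: N_def Nk_def D_def)
  have ends: "d ! 0 = hi" "d ! N = lo"
    using rev_sorted_list_of_set_ends[OF fin[folded D_def] D] N by (simp_all add: d_def dlist_def D_def)
  have d_pos: "0 < d ! i" if "i \<le> N" for i
  proof -
    have "set d = D" "length d = Suc N"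
      using fin N by (simp_all add: d_def dlist_def D_def)
    then have "lo \<le> d ! i" using that D(3) by (metis le_imp_less_Suc nth_mem)
    then show ?thesis by (simp add: lo_def less_le_trans[OF exp_gt_zero])
  qed
  have "0 \<le> g" using N_le by (metis g_def mult_nonneg_nonneg of_nat_0_le_iff order_trans)
  then have t: "0 < t" "t \<le> 1" by (simp_all add: t_def)
  have exponent: "real N * (real k / (2 * g)) \<le> 1 / 2"
  proof (cases "g = 0")
    case False
    then have "real N * (real k / (2 * g)) = (real N * real k) / g / 2" by simp
    also have "\<dots> \<le> 1 / 2" using N_le False \<open>0 \<le> g\<close> by (simp add: N_def g_def divide_le_eq)
    finally show ?thesis .
  qed simp
  have "(\<Prod>i\<in>{i. i < N \<and> d ! (i + 1) / d ! i \<le> t}. d ! (i + 1) / d ! i) \<le> (d ! N / d ! 0) / t ^ N"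
    by (rule prod_small_ratios_le[OF d_pos t])
  also have "\<dots> = exp (- 1 + real N * (real k / (2 * g)))"
    by (simp add: ends lo_def hi_def t_def field_simps flip: exp_add exp_diff exp_of_nat_mult)
  also have "\<dots> \<le> exp (- 1 / 2)" using exponent by simp
  finally show ?thesis
    using k by (simp add: good_def Let_def N_def d_def g_def t_def)
qed

lemma zstar_le: "zstar z m \<le> z m"
  unfolding zstar_def by (rule Min_le) auto

lemma finite_Dset_Nk_le:
  assumes below: "\<And>m. M < m \<Longrightarrow> zstar z m < exp (- real k - 1)"
  shows "finite (Dset z k)" "Nk z k \<le> M + 1"
proof -
  have sub: "Dset z k \<subseteq> zstar z ` {1..M} \<union> {exp (- real k), exp (- real k - 1)}"
    unfolding Dset_def using below by (force simp: not_less)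
  then show "finite (Dset z k)" by (rule finite_subset) simp
  have "card (Dset z k) \<le> card (zstar z ` {1..M} \<union> {exp (- real k), exp (- real k - 1)})"
    using sub by (intro card_mono) simp_all
  also have "\<dots> \<le> card (zstar z ` {1..M}) + card {exp (- real k), exp (- real k - 1)}"
    by (rule card_Un_le)
  also have "\<dots> \<le> M + 2"
    using card_image_le[of "{1..M}" "zstar z"] card_insert_le_m1[of 2] by (simp add: card_insert_if)
  finally show "Nk z k \<le> M + 1" by (simp add: Nk_def)
qed

lemma zstar_tail_below:
  assumes \<phi>: "inc_bij \<phi>" and bound: "\<And>n. n0 \<le> n \<Longrightarrow> z n \<le> C * exp (- \<phi> (real n))"
    and C: "0 < C" and c: "0 \<le> real k + 1 + ln C"
    and m: "n0 + nat \<lceil>ginv \<phi> (real k + 1 + ln C)\<rceil> < m"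
  shows "zstar z m < exp (- real k - 1)"
proof -
  define c where "c = real k + 1 + ln C"
  have "ginv \<phi> c < real m" using m by (simp add: c_def) linarith
  then have "c < \<phi> (real m)"
    using inc_bij_strict_mono[OF \<phi> ginv_nonneg[OF \<phi>]] f_ginv[OF \<phi>] c by (fastforce simp: c_def)
  then have "C * exp (- \<phi> (real m)) < C * exp (- c)" using C by simp
  also have "\<dots> = C * (exp (- real k - 1) * exp (- ln C))" by (simp add: c_def flip: exp_add)
  also have "\<dots> = exp (- real k - 1)" using C by (simp add: exp_minus)
  finally show ?thesis using zstar_le[of z m] bound[of m] m by simp
qed

lemma limsup_less_infinity_imp_bound:
  fixes w :: "nat \<Rightarrow> real"
  assumes "limsup (\<lambda>n. ereal (w n)) < \<infinity>"
  obtains C n0 where "1 \<le> C" "\<And>n. n0 \<le> n \<Longrightarrow> w n \<le> C"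
proof -
  obtain B where "limsup (\<lambda>n. ereal (w n)) < ereal B"
    using ereal_dense2[OF assms] by blast
  then have "eventually (\<lambda>n. ereal (w n) < ereal B) sequentially"
    by (rule Limsup_lessD)
  then obtain n0 where "\<And>n. n0 \<le> n \<Longrightarrow> w n < B"
    by (auto simp: eventually_sequentially)
  then show ?thesis by (intro that[of "max 1 B" n0]) (auto simp: less_imp_le le_max_iff_disj)
qed

lemma add_mult_le_of_squares_le:
  fixes k p g :: real
  assumes "4 * k\<^sup>2 \<le> g" "p\<^sup>2 \<le> g"
  shows "(k + p) * k \<le> g"
proof -
  have "2 * (p * k) \<le> p\<^sup>2 + k\<^sup>2"
    using sum_squares_bound[of p k] by (simp add: power2_eq_square)
  moreover have "(k + p) * k = k\<^sup>2 + p * k"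
    by (simp add: power2_eq_square algebra_simps)
  ultimately show ?thesis using assms zero_le_power2[of k] by linarith
qed

lemma eventually_good_psi_of:
  assumes \<phi>: "inc_bij \<phi>"
    and lim: "limsup (\<lambda>n. ereal (exp (\<phi> (real n)) * z n)) < \<infinity>"
  shows "eventually (\<lambda>k. good (psi_of \<phi>) z k) sequentially"
proof -
  obtain C n0 where C: "1 \<le> C" and n0: "\<And>n. n0 \<le> n \<Longrightarrow> exp (\<phi> (real n)) * z n \<le> C"
    using limsup_less_infinity_imp_bound[OF lim] by blast
  have bound: "z n \<le> C * exp (- \<phi> (real n))" if "n0 \<le> n" for n
    using n0[OF that] by (simp add: exp_minus field_simps)
  define P where "P = ginv \<phi>"
  have "good (psi_of \<phi>) z k"
    if k: "n0 + 2 + nat \<lceil>2 * ln (1 / z 0)\<rceil> + nat \<lceil>1 + ln C\<rceil> \<le> k" for k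
  proof -
    define c where "c = real k + 1 + ln C"
    have c: "0 \<le> c" "c \<le> 2 * real k" using k C by (simp_all add: c_def) linarith
    define M where "M = n0 + nat \<lceil>P c\<rceil>"
    have "zstar z m < exp (- real k - 1)" if "M < m" for m
      using zstar_tail_below[OF \<phi> bound _ c(1)[unfolded c_def]] C that by (simp add: M_def P_def c_def)
    note Dset = finite_Dset_Nk_le[of M z k, OF this]
    have "real (Nk z k) \<le> real n0 + P c + 2"
      using Dset(2) ginv_nonneg[OF \<phi> c(1)] by (simp add: M_def P_def) linarith
    also have "\<dots> \<le> real k + P (2 * real k)"
      using ginv_mono[OF \<phi> c] k by (simp add: P_def)
    finally have "real (Nk z k) * real k \<le> (real k + P (2 * real k)) * real k"
      by (simp add: mult_right_mono)
    moreover have "(real k + P (2 * real k)) * real k \<le> ginv (psi_of \<phi>) (real k)"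
      using ginv_psi_of_lower[OF \<phi>] by (intro add_mult_le_of_squares_le) (simp_all add: P_def)
    moreover have "kzero z \<le> int k" using k by (simp add: kzero_def)
    ultimately show ?thesis using good_if_Nk_le Dset(1) by fastforce
  qed
  then show ?thesis unfolding eventually_sequentially by blast
qed

lemma eventually_imp_density_tendsto_1:
  assumes "eventually P sequentially"
  shows "(\<lambda>k. real (card {r \<in> {1..k}. P r}) / real k) \<longlonglongrightarrow> 1"
proof -
  obtain K where K: "\<And>r. K \<le> r \<Longrightarrow> P r" using assms by (auto simp: eventually_sequentially)
  have "eventually (\<lambda>k. (real k - real K) / real k \<le> real (card {r \<in> {1..k}. P r}) / real k) sequentially"
    using eventually_gt_at_top[of 0]
  proof eventually_elim
    case (elim k)
    have "{K + 1..k} \<subseteq> {r \<in> {1..k}. P r}" using K by auto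
    then have "card {K + 1..k} \<le> card {r \<in> {1..k}. P r}" by (intro card_mono) simp_all
    then show ?case using elim by (intro divide_right_mono) simp_all
  qed
  moreover have "eventually (\<lambda>k. real (card {r \<in> {1..k}. P r}) / real k \<le> 1) sequentially"
    using eventually_gt_at_top[of 0]
  proof eventually_elim
    case (elim k)
    have "card {r \<in> {1..k}. P r} \<le> card {1..k}" by (intro card_mono) auto
    then show ?case using elim by simp
  qed
  moreover have "(\<lambda>k. (real k - real K) / real k) \<longlonglongrightarrow> 1" by real_asymp
  ultimately show ?thesis by (rule tendsto_sandwich) simp
qed

theorem lemma2p6:
  fixes \<phi> :: "real \<Rightarrow> real"
  assumes "inc_bij \<phi>"
    and "\<not> summable (\<lambda>k. 1 / max 1 (ln (inv_into {0..} \<phi> (real (Suc k)))))"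
  shows "\<exists>\<psi> (a :: nat \<Rightarrow> nat).
     inc_bij \<psi> \<and> (\<forall>x\<ge>0. \<psi> x \<le> \<phi> x \<and> \<psi> x \<le> sqrt x) \<and>
     strict_mono a \<and>
     filterlim (\<lambda>k. real (a (Suc k)) - real (a k)) at_top sequentially \<and>
     \<not> summable (\<lambda>k. 1 / max 1 (ln (ginv \<psi> (real (a (Suc k)))))) \<and>
     (\<forall>z :: nat \<Rightarrow> real. (\<forall>n. z n > 0) \<and>
        limsup (\<lambda>n. ereal (exp (\<phi> (real n)) * z n)) < \<infinity> \<longrightarrow>
        liminf (\<lambda>k. ereal (real (card {r \<in> {1..k}. good \<psi> z (a r)}) / real k)) \<ge> ereal (1/2))"
proof -
  note \<phi> = assms(1)
  define \<psi> where "\<psi> = psi_of \<phi>"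
  have \<psi>: "inc_bij \<psi>" unfolding \<psi>_def by (rule inc_bij_psi_of[OF \<phi>])
  define H where "H n = max 1 (ln (ginv \<psi> (real n)))" for n :: nat
  have "incseq H"
    unfolding incseq_def H_def using ginv_nonneg[OF \<psi>] ginv_mono[OF \<psi>]
    by (intro allI impI max_1_ln_mono) simp_all
  moreover have "\<not> summable (\<lambda>n. 1 / H n)"
    using not_summable_psi_of[OF \<phi>] assms(2) ginv_eq_inv_into[OF \<phi>] by (simp add: H_def \<psi>_def)
  ultimately obtain a where a: "strict_mono a"
    "filterlim (\<lambda>k. real (a (Suc k)) - real (a k)) at_top sequentially"
    "\<not> summable (\<lambda>k. 1 / H (a (Suc k)))"
    using not_summable_subseq_growing_gaps[of H] by (force simp: H_def)
  have "liminf (\<lambda>k. ereal (real (card {r \<in> {1..k}. good \<psi> z (a r)}) / real k)) = 1"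
    if "limsup (\<lambda>n. ereal (exp (\<phi> (real n)) * z n)) < \<infinity>" for z
  proof -
    have "eventually (\<lambda>r. good \<psi> z (a r)) sequentially"
      using eventually_good_psi_of[OF \<phi> that] filterlim_subseq[OF a(1)]
      by (simp add: \<psi>_def eventually_compose_filterlim)
    then have "(\<lambda>k. ereal (real (card {r \<in> {1..k}. good \<psi> z (a r)}) / real k)) \<longlonglongrightarrow> 1"
      unfolding one_ereal_def by (intro tendsto_ereal eventually_imp_density_tendsto_1)
    then show ?thesis by (intro lim_imp_Liminf) simp_all
  qed
  then show ?thesis
    using \<psi> psi_of_le a by (auto simp: \<psi>_def H_def one_ereal_def intro!: exI[of _ \<psi>] exI[of _ a])
qed

end
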